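(* Let $G=(V,E,\omega)$ be an undirected graph on $n$ vertices with positive edge weights, and let $k\ge 1$ be an integer. Set $\nu=1/(2^k-1)$ and let $V=A_0\supseteq A_1\supseteq\dots\supseteq A_{k-1}\supseteq A_k=\emptyset$ be obtained by including, for each $0\le i<k-1$, every element of $A_i$ in $A_{i+1}$ independently with probability $p_i=n^{-2^i\nu}$. For $0\le i\le k-1$ and $u\in A_i\setminus A_{i+1}$, let $p(u)\in A_{i+1}$ be a vertex with $d_G(u,p(u))=d_G(u,A_{i+1})$ (undefined if $i=k-1$), and let the bunch be $$B(u)=\{v\in A_i : d_G(u,v)<d_G(u,A_{i+1})\}\cup\{p(u)\}$$ (with $d_G(u,\emptyset)=\infty$ and $\{p(u)\}=\emptyset$ when $i=k-1$). Let $H=\{(u,v): u\in V,\ v\in B(u)\}$, where the edge $(u,v)$ has weight $d_G(u,v)$. Fix any $0<\delta<1/(8k)$ and any $x,y\in V$. Then for every $0\le i\le k-1$ at least one of the following holds: (1) $d^{((3/\delta)^i)}_{G\cup H}(x,y)\le (1+8\delta i)\, d_G(x,y)$; (2) there exists $z\in A_{i+1}$ such that $d^{((3/\delta)^i)}_{G\cup H}(x,z)\le 2\, d_G(x,y)$.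
   Context: $d_G(u,v)$ is the shortest-path distance in $G$, and $d_G(u,S)=\min_{s\in S}d_G(u,s)$. For a weighted graph $F$ and $t>0$, $d^{(t)}_F(u,v)$ denotes the minimum length of a $u$–$v$ path in $F$ with at most $t$ edges (hops). $G\cup H$ is the graph on $V$ with edge set $E\cup H$ (with the given weights). *)

theory Defs
  imports "HOL-Library.Extended_Real"
begin

text \<open>A weighted graph on vertex set V is given by a weight function
  W :: 'a => 'a => ereal, where W u v = infinity means "no edge".
  Walks are nonempty vertex lists; a walk with m+1 vertices has m hops.\<close>

fun walk_len :: "('a \<Rightarrow> 'a \<Rightarrow> ereal) \<Rightarrow> 'a list \<Rightarrow> ereal" where
  "walk_len W (u # v # ps) = W u v + walk_len W (v # ps)"
| "walk_len W _ = 0"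

definition walks :: "'a set \<Rightarrow> 'a \<Rightarrow> 'a \<Rightarrow> 'a list set" where
  "walks V u v = {ps. ps \<noteq> [] \<and> hd ps = u \<and> last ps = v \<and> set ps \<subseteq> V}"

definition gdist :: "'a set \<Rightarrow> ('a \<Rightarrow> 'a \<Rightarrow> ereal) \<Rightarrow> 'a \<Rightarrow> 'a \<Rightarrow> ereal" where
  "gdist V W u v = (INF ps \<in> walks V u v. walk_len W ps)"

definition hopdist :: "'a set \<Rightarrow> ('a \<Rightarrow> 'a \<Rightarrow> ereal) \<Rightarrow> real \<Rightarrow> 'a \<Rightarrow> 'a \<Rightarrow> ereal" where
  "hopdist V W t u v = (INF ps \<in> {ps \<in> walks V u v. real (length ps - 1) \<le> t}. walk_len W ps)"

definition setdist :: "'a set \<Rightarrow> ('a \<Rightarrow> 'a \<Rightarrow> ereal) \<Rightarrow> 'a \<Rightarrow> 'a set \<Rightarrow> ereal" where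
  "setdist V W u S = (INF s \<in> S. gdist V W u s)"

definition graph_weight :: "('a \<times> 'a) set \<Rightarrow> ('a \<Rightarrow> 'a \<Rightarrow> real) \<Rightarrow> 'a \<Rightarrow> 'a \<Rightarrow> ereal" where
  "graph_weight E w u v = (if (u, v) \<in> E then ereal (w u v) else \<infinity>)"

definition bunch_edges :: "'a set \<Rightarrow> ('a \<Rightarrow> 'a \<Rightarrow> ereal) \<Rightarrow> nat \<Rightarrow> (nat \<Rightarrow> 'a set) \<Rightarrow> ('a \<Rightarrow> 'a)
    \<Rightarrow> ('a \<times> 'a) set" where
  "bunch_edges V W k A p = {(u, v). \<exists>i<k. u \<in> A i - A (Suc i) \<and>
      ((v \<in> A i \<and> gdist V W u v < setdist V W u (A (Suc i))) \<or> (A (Suc i) \<noteq> {} \<and> v = p u))}"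

text \<open>Weights of the undirected graph G union H: an H-edge (u,v) has weight d_G(u,v);
  if a pair is an edge of both, the cheaper copy is usable.\<close>
definition union_weight :: "'a set \<Rightarrow> ('a \<Rightarrow> 'a \<Rightarrow> ereal) \<Rightarrow> ('a \<times> 'a) set \<Rightarrow> 'a \<Rightarrow> 'a \<Rightarrow> ereal" where
  "union_weight V W H u v = min (W u v)
     (if (u, v) \<in> H \<or> (v, u) \<in> H then gdist V W u v else \<infinity>)"

end

theory Submission
  imports Defs
begin

(* Induction on the level i, the hop bound growing by the factor 3/\<delta> and the stretch by 8\<delta>
   per level. To connect a and b at distance r, scan a shortest path from each end, covering it
   by pieces of length at least \<delta> r, each supplied by the previous level or by one graph edge.
   Either one scan reaches the other end, or both stall at vertices within 2\<delta> r of pivots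
   z1, z2 \<in> A (i+1), whose distance is at most the uncovered middle part plus 4\<delta> r. Then
   either z2 lies in the bunch of z1 and a single emulator edge bridges the gap, or the pivot
   p(z1) \<in> A (i+2) is at least as close to z1 as z2 is, and a reaches it within 2r. *)

section \<open>Walks and hop-bounded distances\<close>

lemma walk_len_nonneg: "(\<And>u v. W u v \<ge> 0) \<Longrightarrow> walk_len W ps \<ge> 0"
  by (induction W ps rule: walk_len.induct) auto

lemma walk_len_append:
  "xs \<noteq> [] \<Longrightarrow> ys \<noteq> [] \<Longrightarrow>
   walk_len W (xs @ ys) = walk_len W xs + W (last xs) (hd ys) + walk_len W ys"
proof (induction xs)
  case Nil then show ?case by simp
next
  case (Cons x xs)
  then show ?case by (cases xs; cases ys) (auto simp: add.assoc)
qed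

lemma walk_len_join:
  assumes "xs \<noteq> []" "last xs = hd ys"
  shows "walk_len W (xs @ tl ys) = walk_len W xs + walk_len W ys"
proof (cases "tl ys")
  case Nil
  then show ?thesis by (cases ys) simp_all
next
  case (Cons y zs)
  then have "ys = last xs # y # zs" using assms(2) by (cases ys) auto
  then show ?thesis using walk_len_append[OF assms(1), of "tl ys" W] Cons by (simp add: add.assoc)
qed

lemma walk_len_rev:
  assumes "\<And>u v. W u v = W v u"
  shows "walk_len W (rev ps) = walk_len W ps"
proof (induction ps)
  case Nil then show ?case by simp
next
  case (Cons x xs)
  show ?case
  proof (cases xs)
    case Nil then show ?thesis by simp
  next
    case (Cons y ys)
    have "walk_len W (rev (x # xs)) = walk_len W (rev xs) + W y x"
      using walk_len_append[of "rev xs" "[x]" W] Cons by simp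
    then show ?thesis using Cons.IH Cons assms[of y x] by (simp add: add.commute)
  qed
qed

lemma walks_join: "xs \<in> walks V a b \<Longrightarrow> ys \<in> walks V b c \<Longrightarrow> xs @ tl ys \<in> walks V a c"
  by (cases ys) (auto simp: walks_def)

lemma walks_rev: "xs \<in> walks V a b \<Longrightarrow> rev xs \<in> walks V b a"
  by (auto simp: walks_def hd_rev last_rev)

lemma walk_split_at_short_tail:
  fixes \<theta> :: ereal
  assumes "ps \<noteq> []" "0 \<le> \<theta>" "\<theta> < walk_len W ps"
  shows "\<exists>pre suf. ps = pre @ suf \<and> pre \<noteq> [] \<and> suf \<noteq> [] \<and> walk_len W suf \<le> \<theta>
           \<and> \<theta> < W (last pre) (hd suf) + walk_len W suf"
  using assms
proof (induction ps)
  case Nil then show ?case by simp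
next
  case (Cons x xs)
  then obtain y ys where xs: "xs = y # ys" by (cases xs) auto
  show ?case
  proof (cases "walk_len W xs \<le> \<theta>")
    case True
    then show ?thesis using Cons.prems(3) xs by (intro exI[of _ "[x]"] exI[of _ xs]) auto
  next
    case False
    then obtain pre suf where "xs = pre @ suf" "pre \<noteq> []" "suf \<noteq> []" "walk_len W suf \<le> \<theta>"
        "\<theta> < W (last pre) (hd suf) + walk_len W suf"
      using Cons.IH Cons.prems(2) xs by (auto simp: not_le)
    then show ?thesis by (intro exI[of _ "x # pre"] exI[of _ suf]) auto
  qed
qed

lemma gdist_le_walk_len: "ps \<in> walks V u v \<Longrightarrow> gdist V W u v \<le> walk_len W ps"
  unfolding gdist_def by (rule INF_lower)

lemma hopdist_le_walk_len:
  "ps \<in> walks V u v \<Longrightarrow> real (length ps - 1) \<le> t \<Longrightarrow> hopdist V W t u v \<le> walk_len W ps"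
  unfolding hopdist_def by (rule INF_lower) simp

lemma hopdist_antimono: "t \<le> t' \<Longrightarrow> hopdist V W t' u v \<le> hopdist V W t u v"
  unfolding hopdist_def by (rule INF_superset_mono) auto

lemma hopdist_refl_le: "u \<in> V \<Longrightarrow> 0 \<le> t \<Longrightarrow> hopdist V W t u u \<le> 0"
  using hopdist_le_walk_len[of "[u]" V u u t W] by (simp add: walks_def)

lemma hopdist_le_weight: "u \<in> V \<Longrightarrow> v \<in> V \<Longrightarrow> 1 \<le> t \<Longrightarrow> hopdist V W t u v \<le> W u v"
  using hopdist_le_walk_len[of "[u, v]" V u v t W] by (simp add: walks_def)

lemma gdist_nonneg: "(\<And>u v. W u v \<ge> 0) \<Longrightarrow> gdist V W u v \<ge> 0"
  unfolding gdist_def by (rule INF_greatest) (rule walk_len_nonneg)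

lemma gdist_sym:
  assumes "\<And>u v. W u v = W v u"
  shows "gdist V W u v = gdist V W v u"
proof -
  have "gdist V W u v \<le> gdist V W v u" for u v
    unfolding gdist_def[of V W v u]
  proof (rule INF_greatest)
    fix ps assume "ps \<in> walks V v u"
    then have "gdist V W u v \<le> walk_len W (rev ps)" by (intro gdist_le_walk_len walks_rev)
    then show "gdist V W u v \<le> walk_len W ps" by (simp only: walk_len_rev[OF assms])
  qed
  then show ?thesis by (meson antisym)
qed

lemma hopdist_sym:
  assumes "\<And>u v. W u v = W v u"
  shows "hopdist V W t u v = hopdist V W t v u"
proof -
  have "hopdist V W t u v \<le> hopdist V W t v u" for u v
    unfolding hopdist_def[of V W t v u]
  proof (rule INF_greatest)
    fix ps assume "ps \<in> {ps \<in> walks V v u. real (length ps - 1) \<le> t}"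
    then have "hopdist V W t u v \<le> walk_len W (rev ps)"
      by (intro hopdist_le_walk_len walks_rev) auto
    then show "hopdist V W t u v \<le> walk_len W ps" by (simp only: walk_len_rev[OF assms])
  qed
  then show ?thesis by (meson antisym)
qed

lemma hopdist_attained:
  assumes "finite V" "hopdist V W t u v < \<infinity>"
  shows "\<exists>ps \<in> walks V u v. real (length ps - 1) \<le> t \<and> walk_len W ps = hopdist V W t u v"
proof -
  define S where "S = {ps \<in> walks V u v. real (length ps - 1) \<le> t}"
  have "S \<subseteq> {ps. set ps \<subseteq> V \<and> length ps \<le> nat \<lfloor>t\<rfloor> + 1}"
    unfolding S_def walks_def by auto linarith
  then have "finite S" using finite_lists_length_le[OF assms(1)] finite_subset by blast
  moreover have "S \<noteq> {}"
    using assms(2) unfolding hopdist_def S_def[symmetric] by (auto simp: top_ereal_def)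
  ultimately have "Inf (walk_len W ` S) \<in> walk_len W ` S"
    by (simp add: cInf_eq_Min)
  then show ?thesis unfolding hopdist_def S_def by auto
qed

lemma hopdist_triangle:
  assumes "finite V" "hopdist V W t1 a b \<le> ereal X" "hopdist V W t2 b c \<le> ereal Y"
  shows "hopdist V W (t1 + t2) a c \<le> ereal (X + Y)"
proof -
  obtain xs where xs: "xs \<in> walks V a b" "real (length xs - 1) \<le> t1" "walk_len W xs \<le> ereal X"
    using hopdist_attained[OF assms(1), of W t1 a b] assms(2) by fastforce
  obtain ys where ys: "ys \<in> walks V b c" "real (length ys - 1) \<le> t2" "walk_len W ys \<le> ereal Y"
    using hopdist_attained[OF assms(1), of W t2 b c] assms(3) by fastforce
  have "real (length (xs @ tl ys) - 1) \<le> t1 + t2"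
    using xs(1,2) ys(1,2) unfolding walks_def by (cases xs; cases ys) auto
  then have "hopdist V W (t1 + t2) a c \<le> walk_len W (xs @ tl ys)"
    by (intro hopdist_le_walk_len walks_join[OF xs(1) ys(1)])
  also have "\<dots> = walk_len W xs + walk_len W ys"
    using xs(1) ys(1) by (intro walk_len_join) (auto simp: walks_def)
  also have "\<dots> \<le> ereal (X + Y)" using add_mono[OF xs(3) ys(3)] by simp
  finally show ?thesis .
qed

lemma exists_distinct_walk_le:
  assumes "\<And>u v. W u v \<ge> 0" "ps \<in> walks V u v"
  shows "\<exists>qs \<in> walks V u v. distinct qs \<and> walk_len W qs \<le> walk_len W ps"
  using assms(2)
proof (induction ps rule: length_induct)
  case (1 ps)
  show ?case
  proof (cases "distinct ps")
    case True then show ?thesis using 1 by auto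
  next
    case False
    then obtain xs ys zs y where ps: "ps = xs @ [y] @ ys @ [y] @ zs"
      using not_distinct_decomp by blast
    define ps' where "ps' = xs @ [y] @ zs"
    have "ps' \<in> walks V u v" using "1.prems" unfolding ps ps'_def walks_def by (cases xs) auto
    moreover have "length ps' < length ps" unfolding ps ps'_def by simp
    moreover have "walk_len W ps' \<le> walk_len W ps"
    proof -
      have "walk_len W ps
          = walk_len W (xs @ [y]) + (walk_len W (y # ys @ [y]) + walk_len W (y # zs))"
        using walk_len_join[of "xs @ [y]" "y # ys @ [y] @ zs" W]
          walk_len_join[of "y # ys @ [y]" "y # zs" W] unfolding ps by simp
      moreover have "walk_len W ps' = walk_len W (xs @ [y]) + walk_len W (y # zs)"
        using walk_len_join[of "xs @ [y]" "y # zs" W] unfolding ps'_def by simp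
      ultimately show ?thesis
        using walk_len_nonneg[where W=W and ps="y # ys @ [y]", OF assms(1)]
        by (metis add_increasing add_left_mono order_refl)
    qed
    ultimately show ?thesis using "1.IH" by (meson order_trans)
  qed
qed

lemma gdist_attained:
  assumes "finite V" "\<And>u v. W u v \<ge> 0" "u \<in> V" "v \<in> V"
  shows "\<exists>ps \<in> walks V u v. walk_len W ps = gdist V W u v"
proof -
  define S where "S = {qs \<in> walks V u v. distinct qs}"
  have "S \<subseteq> {ps. set ps \<subseteq> V \<and> length ps \<le> card V}"
    unfolding S_def walks_def using assms(1) by (auto intro: card_mono simp flip: distinct_card)
  then have fin: "finite S" using finite_lists_length_le[OF assms(1)] finite_subset by blast
  have "[u, v] \<in> walks V u v" using assms by (simp add: walks_def)
  then have "S \<noteq> {}" using exists_distinct_walk_le[where W=W, OF assms(2)] unfolding S_def by blast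
  then obtain qs where qs: "qs \<in> S" "walk_len W qs = Min (walk_len W ` S)"
    using Min_in[of "walk_len W ` S"] fin by fastforce
  have "walk_len W qs \<le> gdist V W u v"
    unfolding gdist_def
  proof (rule INF_greatest)
    fix ps assume "ps \<in> walks V u v"
    then obtain q where "q \<in> S" "walk_len W q \<le> walk_len W ps"
      using exists_distinct_walk_le[where W=W, OF assms(2)] unfolding S_def by blast
    then show "walk_len W qs \<le> walk_len W ps"
      using qs fin Min_le[of "walk_len W ` S" "walk_len W q"]
      by (metis finite_imageI imageI order_trans)
  qed
  moreover have "gdist V W u v \<le> walk_len W qs" using qs(1) unfolding S_def
    by (auto intro: gdist_le_walk_len)
  ultimately show ?thesis using qs(1) unfolding S_def by (intro bexI[of _ qs]) auto
qed

lemma gdist_triangle: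
  assumes "finite V" "\<And>u v. W u v \<ge> 0" "a \<in> V" "b \<in> V" "c \<in> V"
  shows "gdist V W a c \<le> gdist V W a b + gdist V W b c"
proof -
  obtain xs where xs: "xs \<in> walks V a b" "walk_len W xs = gdist V W a b"
    using gdist_attained[where W=W, OF assms(1,2,3,4)] by blast
  obtain ys where ys: "ys \<in> walks V b c" "walk_len W ys = gdist V W b c"
    using gdist_attained[where W=W, OF assms(1,2,4,5)] by blast
  have "gdist V W a c \<le> walk_len W (xs @ tl ys)"
    by (rule gdist_le_walk_len[OF walks_join[OF xs(1) ys(1)]])
  also have "\<dots> = walk_len W xs + walk_len W ys"
    using xs(1) ys(1) by (intro walk_len_join) (auto simp: walks_def)
  finally show ?thesis using xs ys by simp
qed

lemma ereal_nonneg_sum3_eq_ereal: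
  fixes x y z :: ereal
  assumes "0 \<le> x" "0 \<le> y" "0 \<le> z" "x + y + z = ereal L"
  obtains a b c where "x = ereal a" "y = ereal b" "z = ereal c" "a + b + c = L"
    "0 \<le> a" "0 \<le> b" "0 \<le> c"
  using assms by (cases x; cases y; cases z) auto

(* Hops granted for covering a length s: l for a single piece, plus l + 1 \<le> 2 l for each further
   piece, which covers at least \<theta> more. *)
definition hop_budget :: "real \<Rightarrow> real \<Rightarrow> real \<Rightarrow> real" where
  "hop_budget l \<theta> s = l * (2 * s / \<theta> + 1)"

lemma hop_budget_mono:
  "0 \<le> l \<Longrightarrow> 0 < \<theta> \<Longrightarrow> s \<le> s' \<Longrightarrow> hop_budget l \<theta> s \<le> hop_budget l \<theta> s'"
  unfolding hop_budget_def by (intro mult_left_mono add_right_mono divide_right_mono) auto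

lemma hop_budget_ge: "0 \<le> l \<Longrightarrow> 0 < \<theta> \<Longrightarrow> 0 \<le> s \<Longrightarrow> l \<le> hop_budget l \<theta> s"
  using hop_budget_mono[of l \<theta> 0 s] by (simp add: hop_budget_def)

lemma hop_budget_step:
  assumes "1 \<le> l" "0 < \<theta>" "\<theta> \<le> s' - s"
  shows "hop_budget l \<theta> s + 1 + l \<le> hop_budget l \<theta> s'"
proof -
  have "1 \<le> (s' - s) / \<theta>" using assms(2,3) by simp
  then have "2 * l * 1 \<le> 2 * l * ((s' - s) / \<theta>)" using assms(1) by (intro mult_left_mono) auto
  moreover have "hop_budget l \<theta> s' - hop_budget l \<theta> s = 2 * l * ((s' - s) / \<theta>)"
    unfolding hop_budget_def by (simp add: algebra_simps diff_divide_distrib)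
  ultimately show ?thesis using assms(1) by linarith
qed

lemma hop_budget_total:
  assumes "1 \<le> l" "0 < \<delta>" "\<delta> < 1/8" "0 < D" "s1 + s2 \<le> D"
  shows "hop_budget l (\<delta> * D) s1 + hop_budget l (\<delta> * D) s2 + 2 * l + 3 \<le> 3 / \<delta> * l"
proof -
  have "(s1 + s2) / (\<delta> * D) \<le> 1 / \<delta>"
    using assms divide_right_mono[OF assms(5), of "\<delta> * D"] by simp
  then have "l * (2 * ((s1 + s2) / (\<delta> * D)) + 2) \<le> l * (2 * (1 / \<delta>) + 2)"
    using assms(1) by (intro mult_left_mono) linarith+
  moreover have "hop_budget l (\<delta> * D) s1 + hop_budget l (\<delta> * D) s2
      = l * (2 * ((s1 + s2) / (\<delta> * D)) + 2)"
    unfolding hop_budget_def by (simp add: algebra_simps add_divide_distrib)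
  moreover have "8 * l \<le> l / \<delta>" using assms(1-3) by (simp add: field_simps)
  moreover have "l * (2 * (1 / \<delta>) + 2) = 2 * (l / \<delta>) + 2 * l" "3 / \<delta> * l = 3 * (l / \<delta>)"
    by (simp_all add: algebra_simps)
  ultimately show ?thesis using assms(1) by linarith
qed

section \<open>Bunches\<close>

locale bunch_emulator =
  fixes V :: "'a set" and E :: "('a \<times> 'a) set" and w :: "'a \<Rightarrow> 'a \<Rightarrow> real"
    and k :: nat and A :: "nat \<Rightarrow> 'a set" and p :: "'a \<Rightarrow> 'a" and \<delta> :: real
  assumes finV: "finite V"
    and E_sym: "\<And>u v. (u, v) \<in> E \<Longrightarrow> (v, u) \<in> E"
    and w_sym: "\<And>u v. (u, v) \<in> E \<Longrightarrow> w u v = w v u"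
    and w_pos: "\<And>u v. (u, v) \<in> E \<Longrightarrow> 0 < w u v"
    and k_pos: "1 \<le> k"
    and A0: "A 0 = V"
    and A_mono: "\<And>i. i < k \<Longrightarrow> A (Suc i) \<subseteq> A i"
    and p_def: "\<And>i u. i < k \<Longrightarrow> u \<in> A i - A (Suc i) \<Longrightarrow> A (Suc i) \<noteq> {} \<Longrightarrow>
        p u \<in> A (Suc i) \<and>
        gdist V (graph_weight E w) u (p u) = setdist V (graph_weight E w) u (A (Suc i))"
    and delta: "0 < \<delta>" "\<delta> < 1 / (8 * real k)"
begin

abbreviation "W \<equiv> graph_weight E w"
abbreviation "H \<equiv> bunch_edges V W k A p"
abbreviation "U \<equiv> union_weight V W H"
abbreviation "gd \<equiv> gdist V W"
abbreviation "hop \<equiv> hopdist V U"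

lemma W_pos: "0 < W u v"
  using w_pos by (simp add: graph_weight_def)

lemma W_nonneg: "0 \<le> W u v"
  using W_pos[of u v] by simp

lemma W_sym: "W u v = W v u"
  using E_sym w_sym by (auto simp: graph_weight_def)

lemma gd_nonneg: "0 \<le> gd u v"
  by (rule gdist_nonneg) (rule W_nonneg)

lemma gd_sym: "gd u v = gd v u"
  by (rule gdist_sym) (rule W_sym)

lemma gd_triangle: "a \<in> V \<Longrightarrow> b \<in> V \<Longrightarrow> c \<in> V \<Longrightarrow> gd a c \<le> gd a b + gd b c"
  by (rule gdist_triangle[OF finV W_nonneg])

lemma gd_eq_0_imp_eq:
  assumes "a \<in> V" "b \<in> V" "gd a b = 0"
  shows "a = b"
proof -
  obtain ps where ps: "ps \<in> walks V a b" "walk_len W ps = 0"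
    using gdist_attained[where W=W, OF finV W_nonneg assms(1,2)] assms(3) by auto
  then obtain x xs where "ps = x # xs" by (cases ps) (auto simp: walks_def)
  show ?thesis
  proof (cases xs)
    case Nil
    then show ?thesis using ps \<open>ps = x # xs\<close> by (auto simp: walks_def)
  next
    case (Cons y ys)
    have "0 < W x y + walk_len W xs"
      using W_pos[of x y] walk_len_nonneg[where W=W and ps=xs, OF W_nonneg] by (rule add_pos_nonneg)
    then show ?thesis using ps \<open>ps = x # xs\<close> Cons by simp
  qed
qed

lemma gd_le_ereal:
  assumes "gd u v \<le> ereal r"
  obtains s where "gd u v = ereal s" "0 \<le> s" "s \<le> r"
  using assms gd_nonneg[of u v] by (cases "gd u v") auto

lemma U_sym: "U u v = U v u"
  unfolding union_weight_def by (simp only: W_sym[of u v] gd_sym[of u v] disj_commute)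

lemma U_le_W: "U u v \<le> W u v"
  by (simp add: union_weight_def)

lemma U_le_gd: "(u, v) \<in> H \<Longrightarrow> U u v \<le> gd u v"
  by (simp add: union_weight_def)

lemma gd_le_U: "u \<in> V \<Longrightarrow> v \<in> V \<Longrightarrow> gd u v \<le> U u v"
  using gdist_le_walk_len[of "[u, v]" V u v W] by (simp add: walks_def union_weight_def)

lemma gd_le_walk_len_U: "ps \<in> walks V a b \<Longrightarrow> gd a b \<le> walk_len U ps"
proof (induction ps arbitrary: a)
  case Nil then show ?case by (simp add: walks_def)
next
  case (Cons x xs)
  show ?case
  proof (cases xs)
    case Nil
    then show ?thesis using Cons.prems gdist_le_walk_len[OF Cons.prems] by simp
  next
    case (Cons y ys)
    then have "x = a" "a \<in> V" "y \<in> V" "b \<in> V" "xs \<in> walks V y b"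
      using Cons.prems by (auto simp: walks_def)
        (metis last_in_set subsetD)
    then have "gd a b \<le> U a y + walk_len U xs"
      using gd_triangle[of a y b] gd_le_U[of a y] Cons.IH[of y] by (meson add_mono order_trans)
    then show ?thesis using \<open>x = a\<close> Cons by simp
  qed
qed

lemma gd_le_hop: "gd a b \<le> hop t a b"
  unfolding hopdist_def by (rule INF_greatest) (auto intro: gd_le_walk_len_U)

lemma gd_le_via_hops:
  assumes "z1 \<in> V" "u \<in> V" "u' \<in> V" "z2 \<in> V"
    and "hop t u z1 \<le> ereal X" "gd u u' \<le> ereal M" "hop t' u' z2 \<le> ereal Y"
  shows "gd z1 z2 \<le> ereal (X + M + Y)"
proof -
  have "gd z1 z2 \<le> gd z1 u + (gd u u' + gd u' z2)"
    using gd_triangle[of z1 u z2] gd_triangle[of u u' z2] assms(1-4)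
    by (meson add_left_mono order_trans)
  also have "\<dots> \<le> ereal X + (ereal M + ereal Y)"
    using gd_le_hop[of u z1 t] gd_le_hop[of u' z2 t'] assms(5-7) gd_sym[of z1 u]
    by (intro add_mono) auto
  finally show ?thesis by (simp add: add.assoc)
qed

lemma hop_sym: "hop t a b = hop t b a"
  by (rule hopdist_sym) (rule U_sym)

lemma hop_le_ereal_mono: "hop t a b \<le> ereal X \<Longrightarrow> t \<le> t' \<Longrightarrow> X \<le> Y \<Longrightarrow> hop t' a b \<le> ereal Y"
  by (meson ereal_less_eq(3) hopdist_antimono order_trans)

lemma delta_lt_one_eighth: "\<delta> < 1 / 8"
proof -
  have "1 / (8 * real k) \<le> 1 / 8" using k_pos by (simp add: field_simps)
  then show ?thesis using delta by linarith
qed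

lemma A_subset_V: "i \<le> k \<Longrightarrow> A i \<subseteq> V"
proof (induction i)
  case (Suc i)
  then show ?case using A_mono[of i] by simp
qed (simp add: A0)

lemma bunch_hop:
  assumes "j < k" "u \<in> A j" "v \<in> A j"
  shows "hop 1 u v \<le> gd u v \<or> (\<exists>z \<in> A (Suc j). hop 1 u z \<le> gd u v)"
proof -
  have uV: "u \<in> V" and vV: "v \<in> V" using assms A_subset_V[of j] by auto
  consider "gd u v = \<infinity>" | "u \<in> A (Suc j)"
    | "u \<notin> A (Suc j)" "gd u v < setdist V W u (A (Suc j))"
    | "u \<notin> A (Suc j)" "setdist V W u (A (Suc j)) \<le> gd u v" "gd u v \<noteq> \<infinity>"
    by fastforce
  then show ?thesis
  proof cases
    case 1
    then show ?thesis by simp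
  next
    case 2
    then show ?thesis using hopdist_refl_le[OF uV, of 1 U] gd_nonneg[of u v] by force
  next
    case 3
    then have "(u, v) \<in> H" using assms unfolding bunch_edges_def by blast
    then have "hop 1 u v \<le> gd u v"
      using hopdist_le_weight[OF uV vV, of 1 U] U_le_gd[of u v] by (meson order_trans order_refl)
    then show ?thesis ..
  next
    case 4
    then have "A (Suc j) \<noteq> {}" by (auto simp: setdist_def top_ereal_def)
    then have pu: "p u \<in> A (Suc j)" "gd u (p u) \<le> gd u v" "(u, p u) \<in> H"
      using p_def[of j u] 4 assms unfolding bunch_edges_def by auto
    moreover have "p u \<in> V" using pu(1) A_subset_V[of "Suc j"] assms(1) by auto
    ultimately show ?thesis
      using hopdist_le_weight[OF uV, of "p u" 1 U] U_le_gd[of u "p u"]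
      by (meson order_trans order_refl)
  qed
qed

lemma bunch_hop_bridge:
  assumes "j < k" "z1 \<in> A j" "z2 \<in> A j" "gd z1 z2 \<le> ereal R"
    and "hop t1 a z1 \<le> ereal X1" "hop t2 b z2 \<le> ereal X2"
  shows "hop (t1 + 1 + t2) a b \<le> ereal (X1 + R + X2)
    \<or> (\<exists>z\<in>A (Suc j). hop (t1 + 1) a z \<le> ereal (X1 + R))"
proof -
  have z2b: "hop t2 z2 b \<le> ereal X2" using assms(6) hop_sym by simp
  from bunch_hop[OF assms(1-3)] show ?thesis
  proof
    assume "hop 1 z1 z2 \<le> gd z1 z2"
    then have "hop 1 z1 z2 \<le> ereal R" using assms(4) by (rule order_trans)
    then show ?thesis using hopdist_triangle[OF finV hopdist_triangle[OF finV assms(5)] z2b] by simp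
  next
    assume "\<exists>z\<in>A (Suc j). hop 1 z1 z \<le> gd z1 z2"
    then obtain z where "z \<in> A (Suc j)" "hop 1 z1 z \<le> ereal R"
      using assms(4) by (auto dest: order_trans)
    then show ?thesis using hopdist_triangle[OF finV assms(5)] by blast
  qed
qed

(* The claim of the theorem at level i, for every upper bound r of the distance, which keeps
   infinite distances out of the arithmetic. *)
definition stretch_or_pivot :: "nat \<Rightarrow> real \<Rightarrow> real \<Rightarrow> bool" where
  "stretch_or_pivot i t c \<longleftrightarrow> (\<forall>a\<in>V. \<forall>b\<in>V. \<forall>r. gd a b \<le> ereal r \<longrightarrow>
      hop t a b \<le> ereal (c * r) \<or> (\<exists>z\<in>A (Suc i). hop t a z \<le> ereal (2 * r)))"

lemma stretch_or_pivot_0: "stretch_or_pivot 0 1 1"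
  unfolding stretch_or_pivot_def
proof (intro ballI allI impI)
  fix a b r assume "a \<in> V" "b \<in> V" and r: "gd a b \<le> ereal r"
  have "0 \<le> r" by (rule gd_le_ereal[OF r]) linarith
  have "hop 1 a b \<le> gd a b \<or> (\<exists>z\<in>A (Suc 0). hop 1 a z \<le> gd a b)"
    using bunch_hop[of 0 a b] \<open>a \<in> V\<close> \<open>b \<in> V\<close> A0 k_pos by simp
  moreover have "gd a b \<le> ereal (2 * r)" using r \<open>0 \<le> r\<close> by (simp add: order_trans)
  ultimately show "hop 1 a b \<le> ereal (1 * r) \<or> (\<exists>z\<in>A (Suc 0). hop 1 a z \<le> ereal (2 * r))"
    using r by (auto dest: order_trans)
qed

section \<open>Scanning a shortest path\<close>

context
  fixes i :: nat and l c D :: real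
  assumes claim: "stretch_or_pivot i l c" and i_lt_k: "i < k"
    and l_ge_1: "1 \<le> l" and c_ge_1: "1 \<le> c" and D_pos: "0 < D"
begin

abbreviation budget :: "real \<Rightarrow> real" where
  "budget \<equiv> hop_budget l (\<delta> * D)"

(* The scan from a towards b got stuck at u, near a pivot in A (Suc i), after covering a part of
   length L1 of the path within the hop budget. *)
definition stalls_at_pivot :: "'a \<Rightarrow> 'a \<Rightarrow> real \<Rightarrow> bool" where
  "stalls_at_pivot a b L \<longleftrightarrow> (\<exists>u\<in>V. \<exists>L1\<ge>0. gd u b \<le> ereal (L - L1)
      \<and> hop (budget L1 + 1) a u \<le> ereal (c * L1)
      \<and> (\<exists>z\<in>A (Suc i). hop l u z \<le> ereal (2 * \<delta> * D)))"

lemma stalls_at_pivot_extend: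
  assumes "stalls_at_pivot a a' L" "a' \<in> V" "b \<in> V" "gd a' b \<le> ereal R"
  shows "stalls_at_pivot a b (L + R)"
proof -
  obtain u L1 where u: "u \<in> V" "0 \<le> L1" "gd u a' \<le> ereal (L - L1)"
      "hop (budget L1 + 1) a u \<le> ereal (c * L1)" "\<exists>z\<in>A (Suc i). hop l u z \<le> ereal (2 * \<delta> * D)"
    using assms(1) unfolding stalls_at_pivot_def by blast
  have "gd u b \<le> gd u a' + gd a' b" using gd_triangle u(1) assms(2,3) by blast
  also have "\<dots> \<le> ereal (L + R - L1)" using add_mono[OF u(3) assms(4)] by (simp add: algebra_simps)
  finally show ?thesis using u unfolding stalls_at_pivot_def by auto
qed

lemma scan_short:
  assumes "a \<in> V" "b \<in> V" "gd a b \<le> ereal L" "L \<le> \<delta> * D"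
  shows "hop (budget L) a b \<le> ereal (c * L) \<or> stalls_at_pivot a b L"
proof -
  have "0 \<le> L" by (rule gd_le_ereal[OF assms(3)]) linarith
  have "hop l a b \<le> ereal (c * L) \<or> (\<exists>z\<in>A (Suc i). hop l a z \<le> ereal (2 * L))"
    using claim assms(1-3) unfolding stretch_or_pivot_def by blast
  then show ?thesis
  proof
    assume "hop l a b \<le> ereal (c * L)"
    moreover have "l \<le> budget L" using hop_budget_ge l_ge_1 delta D_pos \<open>0 \<le> L\<close> by simp
    ultimately show ?thesis using hop_le_ereal_mono by blast
  next
    assume "\<exists>z\<in>A (Suc i). hop l a z \<le> ereal (2 * L)"
    then have "\<exists>z\<in>A (Suc i). hop l a z \<le> ereal (2 * \<delta> * D)"
      using assms(4) hop_le_ereal_mono[OF _ order_refl, of l a _ "2 * L" "2 * \<delta> * D"] by auto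
    moreover have "hop (budget 0 + 1) a a \<le> ereal (c * 0)"
      using hopdist_refl_le[OF assms(1)] l_ge_1 by (simp add: hop_budget_def zero_ereal_def)
    ultimately show ?thesis using assms unfolding stalls_at_pivot_def by fastforce
  qed
qed

lemma scan_extend:
  assumes covered: "hop (budget Lp) a a' \<le> ereal (c * Lp)" and "0 \<le> Lp"
    and V: "a' \<in> V" "b' \<in> V" "b \<in> V"
    and e: "W a' b' = ereal e" and Ls: "gd b' b \<le> ereal Ls" "Ls \<le> \<delta> * D" "\<delta> * D \<le> e + Ls"
  shows "hop (budget (Lp + e + Ls)) a b \<le> ereal (c * (Lp + e + Ls))
    \<or> stalls_at_pivot a b (Lp + e + Ls)"
proof -
  have "0 \<le> e" using W_nonneg[of a' b'] e by simp
  then have ce: "e \<le> c * e" using c_ge_1 by (simp add: mult_le_cancel_right1)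
  have "hop 1 a' b' \<le> ereal e"
    using hopdist_le_weight[OF V(1,2)] U_le_W e by (metis order_trans order_refl)
  then have to_b': "hop (budget Lp + 1) a b' \<le> ereal (c * Lp + e)"
    using hopdist_triangle[OF finV covered] by blast
  have "hop l b' b \<le> ereal (c * Ls) \<or> (\<exists>z\<in>A (Suc i). hop l b' z \<le> ereal (2 * Ls))"
    using claim V(2,3) Ls(1) unfolding stretch_or_pivot_def by blast
  then show ?thesis
  proof
    assume "hop l b' b \<le> ereal (c * Ls)"
    then have "hop (budget Lp + 1 + l) a b \<le> ereal (c * Lp + e + c * Ls)"
      using hopdist_triangle[OF finV to_b'] by blast
    moreover have "budget Lp + 1 + l \<le> budget (Lp + e + Ls)"
      using hop_budget_step l_ge_1 delta D_pos Ls(3) by simp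
    ultimately show ?thesis using ce hop_le_ereal_mono by (simp add: distrib_left)
  next
    assume "\<exists>z\<in>A (Suc i). hop l b' z \<le> ereal (2 * Ls)"
    then have "\<exists>z\<in>A (Suc i). hop l b' z \<le> ereal (2 * \<delta> * D)"
      using Ls(2) hop_le_ereal_mono[OF _ order_refl, of l b' _ "2 * Ls" "2 * \<delta> * D"] by auto
    moreover have "budget Lp \<le> budget (Lp + e)"
      using hop_budget_mono l_ge_1 delta D_pos \<open>0 \<le> e\<close> by simp
    then have "hop (budget (Lp + e) + 1) a b' \<le> ereal (c * (Lp + e))"
      using to_b' ce by (auto intro: hop_le_ereal_mono simp: distrib_left)
    ultimately show ?thesis
      using V Ls(1) \<open>0 \<le> Lp\<close> \<open>0 \<le> e\<close> unfolding stalls_at_pivot_def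
      by (intro disjI2 bexI[of _ b'] exI[of _ "Lp + e"]) auto
  qed
qed

lemma walk_scan:
  "ps \<in> walks V a b \<Longrightarrow> walk_len W ps = ereal L
    \<Longrightarrow> hop (budget L) a b \<le> ereal (c * L) \<or> stalls_at_pivot a b L"
proof (induction ps arbitrary: b L rule: length_induct)
  case (1 ps)
  have V: "a \<in> V" "b \<in> V" and ps: "ps \<noteq> []" using "1.prems"(1) by (auto simp: walks_def)
  show ?case
  proof (cases "L \<le> \<delta> * D")
    case True
    then show ?thesis using scan_short V gdist_le_walk_len[where W=W, OF "1.prems"(1)] "1.prems"(2)
      by simp
  next
    case False
    then obtain pre suf where split: "ps = pre @ suf" "pre \<noteq> []" "suf \<noteq> []"
        "walk_len W suf \<le> ereal (\<delta> * D)" "ereal (\<delta> * D) < W (last pre) (hd suf) + walk_len W suf"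
      using walk_split_at_short_tail[OF ps, of "ereal (\<delta> * D)" W] "1.prems"(2) delta D_pos by auto
    define a' b' where "a' = last pre" and "b' = hd suf"
    have pre: "pre \<in> walks V a a'" and suf: "suf \<in> walks V b' b" and "a' \<in> V" "b' \<in> V"
      using "1.prems"(1) split(1-3) unfolding a'_def b'_def walks_def by auto
    have "walk_len W pre + W a' b' + walk_len W suf = ereal L"
      using walk_len_append[OF split(2,3), of W] "1.prems"(2) split(1)
      unfolding a'_def b'_def by simp
    then obtain Lp e Ls where lens: "walk_len W pre = ereal Lp" "W a' b' = ereal e"
        "walk_len W suf = ereal Ls" "Lp + e + Ls = L" "0 \<le> Lp" "0 \<le> e" "0 \<le> Ls"
      by (rule ereal_nonneg_sum3_eq_ereal[OF walk_len_nonneg[OF W_nonneg] W_nonneg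
            walk_len_nonneg[OF W_nonneg]])
    have "length pre < length ps" using split(1,3) by simp
    then have IH: "hop (budget Lp) a a' \<le> ereal (c * Lp) \<or> stalls_at_pivot a a' Lp"
      using "1.IH" pre lens(1) by blast
    have Ls: "gd b' b \<le> ereal Ls" "Ls \<le> \<delta> * D" "\<delta> * D \<le> e + Ls"
      using gdist_le_walk_len[where W=W, OF suf] split(4,5) lens(2,3)
      unfolding a'_def b'_def by auto
    have "gd a' b \<le> ereal (e + Ls)"
      using gdist_le_walk_len[of "a' # suf" V a' b W] suf lens(2,3) split(3) \<open>a' \<in> V\<close>
      unfolding b'_def walks_def by (cases suf) auto
    with IH show ?thesis
      using scan_extend[OF _ lens(5) \<open>a' \<in> V\<close> \<open>b' \<in> V\<close> V(2) lens(2) Ls]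
        stalls_at_pivot_extend[OF _ \<open>a' \<in> V\<close> V(2)] lens(4)
      by (auto simp: add.assoc)
  qed
qed

lemma scan_shortest_path:
  assumes "a \<in> V" "b \<in> V" "gd a b = ereal L"
  shows "hop (budget L) a b \<le> ereal (c * L) \<or> stalls_at_pivot a b L"
proof -
  obtain ps where "ps \<in> walks V a b" "walk_len W ps = gd a b"
    using gdist_attained[where W=W, OF finV W_nonneg assms(1,2)] by blast
  then show ?thesis using walk_scan assms(3) by simp
qed

definition near_pivot_pair :: "'a \<Rightarrow> 'a \<Rightarrow> bool" where
  "near_pivot_pair a b \<longleftrightarrow> (\<exists>z1\<in>A (Suc i). \<exists>z2\<in>A (Suc i). \<exists>L1\<ge>0. \<exists>M1\<ge>0. \<exists>M2\<ge>0.
      L1 + M1 + M2 \<le> D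
      \<and> hop (budget L1 + 1 + l) a z1 \<le> ereal (c * L1 + 2 * \<delta> * D)
      \<and> hop (budget M1 + 1 + l) b z2 \<le> ereal (c * M1 + 2 * \<delta> * D)
      \<and> gd z1 z2 \<le> ereal (4 * \<delta> * D + M2))"

lemma budget_pair_le:
  "s1 + s2 \<le> D \<Longrightarrow> budget s1 + budget s2 + 2 * l + 3 \<le> 3 / \<delta> * l"
  using hop_budget_total l_ge_1 delta delta_lt_one_eighth D_pos by blast

lemma scan_from_stall:
  assumes stall: "stalls_at_pivot a b L" and "b \<in> V" "L \<le> D"
  shows "hop (3 / \<delta> * l) a b \<le> ereal (c * D) \<or> near_pivot_pair a b"
proof -
  obtain u L1 z1 where u: "u \<in> V" "0 \<le> L1" "gd u b \<le> ereal (L - L1)"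
      "hop (budget L1 + 1) a u \<le> ereal (c * L1)"
    and z1: "z1 \<in> A (Suc i)" "hop l u z1 \<le> ereal (2 * \<delta> * D)"
    using stall unfolding stalls_at_pivot_def by blast
  obtain L2 where L2: "gd b u = ereal L2" "0 \<le> L2" "L2 \<le> L - L1"
    by (rule gd_le_ereal[OF u(3)[unfolded gd_sym[of u b]]]) auto
  from scan_shortest_path[OF \<open>b \<in> V\<close> u(1) L2(1)] show ?thesis
  proof
    assume "hop (budget L2) b u \<le> ereal (c * L2)"
    then have "hop (budget L2) u b \<le> ereal (c * L2)" by (simp only: hop_sym)
    then have "hop (budget L1 + 1 + budget L2) a b \<le> ereal (c * L1 + c * L2)"
      by (rule hopdist_triangle[OF finV u(4)])
    moreover have "budget L1 + 1 + budget L2 \<le> 3 / \<delta> * l"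
      using budget_pair_le[of L1 L2] L2(3) assms(3) l_ge_1 by simp
    moreover have "c * L1 + c * L2 \<le> c * D"
      using L2(3) assms(3) c_ge_1 by (simp flip: distrib_left)
    ultimately show ?thesis using hop_le_ereal_mono by blast
  next
    assume "stalls_at_pivot b u L2"
    then obtain u' M1 z2 where u': "u' \<in> V" "0 \<le> M1" "gd u' u \<le> ereal (L2 - M1)"
        "hop (budget M1 + 1) b u' \<le> ereal (c * M1)"
      and z2: "z2 \<in> A (Suc i)" "hop l u' z2 \<le> ereal (2 * \<delta> * D)"
      unfolding stalls_at_pivot_def by blast
    have "0 \<le> L2 - M1" by (rule gd_le_ereal[OF u'(3)]) linarith
    have "z1 \<in> V" "z2 \<in> V" using z1(1) z2(1) A_subset_V[of "Suc i"] i_lt_k by auto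
    then have "gd z1 z2 \<le> ereal (2 * \<delta> * D + (L2 - M1) + 2 * \<delta> * D)"
      using gd_le_via_hops z1(2) z2(2) u(1) u'(1,3) gd_sym[of u' u] by metis
    then have "gd z1 z2 \<le> ereal (4 * \<delta> * D + (L2 - M1))" by (simp add: algebra_simps)
    moreover have "hop (budget L1 + 1 + l) a z1 \<le> ereal (c * L1 + 2 * \<delta> * D)"
      using hopdist_triangle[OF finV u(4) z1(2)] .
    moreover have "hop (budget M1 + 1 + l) b z2 \<le> ereal (c * M1 + 2 * \<delta> * D)"
      using hopdist_triangle[OF finV u'(4) z2(2)] .
    moreover have "L1 + M1 + (L2 - M1) \<le> D" using L2(3) assms(3) by simp
    ultimately show ?thesis
      unfolding near_pivot_pair_def using z1(1) z2(1) u(2) u'(2) \<open>0 \<le> L2 - M1\<close> by blast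
  qed
qed

lemma scan_both_ends:
  assumes "a \<in> V" "b \<in> V" "gd a b \<le> ereal D"
  shows "hop (3 / \<delta> * l) a b \<le> ereal (c * D) \<or> near_pivot_pair a b"
proof -
  obtain L where L: "gd a b = ereal L" "0 \<le> L" "L \<le> D" using gd_le_ereal[OF assms(3)] by blast
  from scan_shortest_path[OF assms(1,2) L(1)] show ?thesis
  proof
    assume "hop (budget L) a b \<le> ereal (c * L)"
    moreover have "budget L \<le> 3 / \<delta> * l"
      using budget_pair_le[of L 0] L(3) l_ge_1 by (simp add: hop_budget_def)
    moreover have "c * L \<le> c * D" using L(3) c_ge_1 by simp
    ultimately show ?thesis using hop_le_ereal_mono by blast
  qed (use scan_from_stall assms(2) L(3) in blast)
qed

lemma near_pivot_pair_bridge: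
  assumes "near_pivot_pair a b" "Suc i < k" "c + 16 * \<delta> \<le> 2"
  shows "hop (3 / \<delta> * l) a b \<le> ereal ((c + 8 * \<delta>) * D)
    \<or> (\<exists>z\<in>A (Suc (Suc i)). hop (3 / \<delta> * l) a z \<le> ereal (2 * D))"
proof -
  obtain z1 z2 L1 M1 M2 where z: "z1 \<in> A (Suc i)" "z2 \<in> A (Suc i)"
      and lens: "0 \<le> L1" "0 \<le> M1" "0 \<le> M2" "L1 + M1 + M2 \<le> D"
      and hops: "hop (budget L1 + 1 + l) a z1 \<le> ereal (c * L1 + 2 * \<delta> * D)"
        "hop (budget M1 + 1 + l) b z2 \<le> ereal (c * M1 + 2 * \<delta> * D)"
      and gz: "gd z1 z2 \<le> ereal (4 * \<delta> * D + M2)"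
    using assms(1) unfolding near_pivot_pair_def by blast
  have M2: "M2 \<le> c * M2" "0 \<le> c * M1" and LMD: "c * (L1 + M1 + M2) \<le> c * D"
    using lens c_ge_1 by (simp_all add: mult_le_cancel_right1)
  have "c * L1 + 2 * \<delta> * D + (4 * \<delta> * D + M2) + (c * M1 + 2 * \<delta> * D)
      = c * L1 + c * M1 + M2 + 8 * (\<delta> * D)" by algebra
  also have "\<dots> \<le> c * (L1 + M1 + M2) + 8 * (\<delta> * D)" using M2 by (simp add: distrib_left)
  also have "\<dots> \<le> (c + 8 * \<delta>) * D" using LMD by (simp add: distrib_right)
  finally have to_b: "c * L1 + 2 * \<delta> * D + (4 * \<delta> * D + M2) + (c * M1 + 2 * \<delta> * D)
      \<le> (c + 8 * \<delta>) * D" .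
  have "c * L1 + 2 * \<delta> * D + (4 * \<delta> * D + M2) = c * L1 + M2 + 6 * (\<delta> * D)" by algebra
  also have "\<dots> \<le> c * (L1 + M1 + M2) + 6 * (\<delta> * D)" using M2 by (simp add: distrib_left)
  also have "\<dots> \<le> (c + 6 * \<delta>) * D" using LMD by (simp add: distrib_right)
  also have "\<dots> \<le> 2 * D" using assms(3) delta D_pos by (intro mult_right_mono) auto
  finally have to_pivot: "c * L1 + 2 * \<delta> * D + (4 * \<delta> * D + M2) \<le> 2 * D" .
  have "budget L1 + 1 + l + 1 + (budget M1 + 1 + l) \<le> 3 / \<delta> * l"
    "budget L1 + 1 + l + 1 \<le> 3 / \<delta> * l"
    using budget_pair_le[of L1 M1] budget_pair_le[of L1 0] lens l_ge_1
    by (simp_all add: hop_budget_def)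
  with bunch_hop_bridge[OF assms(2) z gz hops] to_b to_pivot show ?thesis
    using hop_le_ereal_mono by blast
qed

end

lemma stretch_or_pivot_Suc:
  assumes claim: "stretch_or_pivot i l c" and "Suc i < k"
    and "1 \<le> l" "1 \<le> c" "c + 16 * \<delta> \<le> 2"
  shows "stretch_or_pivot (Suc i) (3 / \<delta> * l) (c + 8 * \<delta>)"
  unfolding stretch_or_pivot_def
proof (intro ballI allI impI)
  fix a b r assume ab: "a \<in> V" "b \<in> V" and r: "gd a b \<le> ereal r"
  have "0 \<le> r" by (rule gd_le_ereal[OF r]) linarith
  show "hop (3 / \<delta> * l) a b \<le> ereal ((c + 8 * \<delta>) * r)
    \<or> (\<exists>z\<in>A (Suc (Suc i)). hop (3 / \<delta> * l) a z \<le> ereal (2 * r))"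
  proof (cases "r = 0") \<comment> \<open>the scan needs segments of positive length \<open>\<delta> * r\<close>\<close>
    case True
    then have "a = b" using gd_eq_0_imp_eq ab r gd_nonneg[of a b] by (simp add: zero_ereal_def)
    moreover have "0 \<le> 3 / \<delta> * l" using \<open>1 \<le> l\<close> delta by simp
    ultimately show ?thesis using hopdist_refl_le[OF ab(1)] True by (simp add: zero_ereal_def)
  next
    case False
    then have "0 < r" using \<open>0 \<le> r\<close> by simp
    have "c * r \<le> (c + 8 * \<delta>) * r" using \<open>0 \<le> r\<close> delta by (simp add: mult_right_mono)
    then show ?thesis
      using scan_both_ends[OF claim _ assms(3,4) \<open>0 < r\<close> ab r] assms(2)
        near_pivot_pair_bridge[OF claim _ assms(3,4) \<open>0 < r\<close> _ assms(2,5)]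
      by (auto intro: hop_le_ereal_mono)
  qed
qed

lemma stretch_or_pivot_level:
  "i < k \<Longrightarrow> stretch_or_pivot i ((3 / \<delta>) ^ i) (1 + 8 * \<delta> * real i)"
proof (induction i)
  case 0
  then show ?case using stretch_or_pivot_0 by simp
next
  case (Suc i)
  have "1 \<le> 3 / \<delta>" using delta delta_lt_one_eighth by (simp add: field_simps)
  then have "1 \<le> (3 / \<delta>) ^ i" by (rule one_le_power)
  moreover have "8 * \<delta> * real (Suc (Suc i)) \<le> 8 * \<delta> * real k" using Suc.prems delta by simp
  then have "1 + 8 * \<delta> * real i + 16 * \<delta> \<le> 2" using delta k_pos by (simp add: field_simps)
  ultimately show ?case
    using stretch_or_pivot_Suc[OF Suc.IH] Suc.prems delta by (simp add: algebra_simps)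
qed

end

theorem mainTheorem1:
  fixes V :: "'a set" and E :: "('a \<times> 'a) set" and w :: "'a \<Rightarrow> 'a \<Rightarrow> real"
    and k :: nat and A :: "nat \<Rightarrow> 'a set" and p :: "'a \<Rightarrow> 'a"
    and \<delta> :: real and x y :: 'a
  assumes finV: "finite V"
    and E_sub: "E \<subseteq> V \<times> V"
    and E_sym: "\<And>u v. (u, v) \<in> E \<Longrightarrow> (v, u) \<in> E"
    and w_sym: "\<And>u v. (u, v) \<in> E \<Longrightarrow> w u v = w v u"
    and w_pos: "\<And>u v. (u, v) \<in> E \<Longrightarrow> w u v > 0"
    and k_pos: "k \<ge> 1"
    and A0: "A 0 = V"
    and Ak: "A k = {}"
    and A_mono: "\<And>i. i < k \<Longrightarrow> A (Suc i) \<subseteq> A i"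
    and p_def: "\<And>i u. i < k \<Longrightarrow> u \<in> A i - A (Suc i) \<Longrightarrow> A (Suc i) \<noteq> {} \<Longrightarrow>
        p u \<in> A (Suc i) \<and>
        gdist V (graph_weight E w) u (p u) = setdist V (graph_weight E w) u (A (Suc i))"
    and delta: "0 < \<delta>" "\<delta> < 1 / (8 * real k)"
    and xy: "x \<in> V" "y \<in> V"
  shows "\<forall>i<k.
    hopdist V (union_weight V (graph_weight E w) (bunch_edges V (graph_weight E w) k A p))
        ((3 / \<delta>) ^ i) x y
      \<le> ereal (1 + 8 * \<delta> * real i) * gdist V (graph_weight E w) x y
    \<or> (\<exists>z \<in> A (Suc i).
        hopdist V (union_weight V (graph_weight E w) (bunch_edges V (graph_weight E w) k A p))
          ((3 / \<delta>) ^ i) x z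
        \<le> 2 * gdist V (graph_weight E w) x y)"
proof (intro allI impI)
  interpret bunch_emulator V E w k A p \<delta>
    using finV E_sym w_sym w_pos k_pos A0 A_mono p_def delta by unfold_locales auto
  fix i assume "i < k"
  then have claim: "stretch_or_pivot i ((3 / \<delta>) ^ i) (1 + 8 * \<delta> * real i)"
    by (rule stretch_or_pivot_level)
  have "0 < 1 + 8 * \<delta> * real i" using delta by (simp add: add_pos_nonneg)
  then show "hop ((3 / \<delta>) ^ i) x y \<le> ereal (1 + 8 * \<delta> * real i) * gd x y
    \<or> (\<exists>z \<in> A (Suc i). hop ((3 / \<delta>) ^ i) x z \<le> 2 * gd x y)"
  proof (cases "gd x y")
    case (real r)
    then show ?thesis using claim xy unfolding stretch_or_pivot_def by auto
  qed (use gd_nonneg[of x y] in auto)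
qed

end
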